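(* Let $f:\mathbb R^n\to\mathbb R$ be convex, differentiable and $L$-Lipschitz smooth, let $g:\mathbb R^n\to\mathbb R\cup\{+\infty\}$ be proper, closed and convex, and let $F=f+g$. Let $\epsilon\ge0$, $B\ge0$, $\rho\ge0$, $x\in\mathbb R^n$, and let $\tilde x$ satisfy $\mathbf 0\in\nabla f(x)-(B+\rho)(x-\tilde x)+\partial_\epsilon g(\tilde x)$ (i.e. $\tilde x\approx_\epsilon T_{B+\rho}(x)$) together with the line search condition $D_f(\tilde x,x)\le\frac B2\|x-\tilde x\|^2$. Then for all $z\in\mathbb R^n$, $$-\epsilon\le F(z)-F(\tilde x)+\frac{B+\rho}{2}\|x-z\|^2-\frac{B+\rho}{2}\|z-\tilde x\|^2-\frac\rho2\|\tilde x-x\|^2.$$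
   Context: $D_f(u,w):=f(u)-f(w)-\langle\nabla f(w),u-w\rangle$ (Bregman divergence). $f$ is $L$-Lipschitz smooth means $D_f(u,w)\le\frac L2\|u-w\|^2$ for all $u,w$. For proper $h$ and $\epsilon\ge0$, $\partial_\epsilon h(\bar x)=\{v:\langle v,u-\bar x\rangle\le h(u)-h(\bar x)+\epsilon\ \forall u\in\mathbb R^n\}$ if $\bar x\in\operatorname{dom}h$, and $\emptyset$ otherwise. *)

theory Defs
  imports "HOL-Analysis.Analysis" "HOL-Library.Extended_Real"
begin

text \<open>Extended-real-valued functions g : R^n -> R \<union> {+\<infinity>}, modelled as maps into ereal
  that never take the value -\<infinity>.\<close>

definition edom :: "('a \<Rightarrow> ereal) \<Rightarrow> 'a set" where
  "edom h = {u. h u < \<infinity>}"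

definition proper_fun :: "('a \<Rightarrow> ereal) \<Rightarrow> bool" where
  "proper_fun h \<longleftrightarrow> (\<forall>u. h u \<noteq> -\<infinity>) \<and> edom h \<noteq> {}"

definition closed_fun :: "('a::topological_space \<Rightarrow> ereal) \<Rightarrow> bool" where
  "closed_fun h \<longleftrightarrow> closed {(u, t::real). h u \<le> ereal t}"

definition convex_efun :: "('a::real_vector \<Rightarrow> ereal) \<Rightarrow> bool" where
  "convex_efun h \<longleftrightarrow> (\<forall>u w (t::real). 0 \<le> t \<and> t \<le> 1 \<longrightarrow>
      h ((1 - t) *\<^sub>R u + t *\<^sub>R w) \<le> ereal (1 - t) * h u + ereal t * h w)"

definition bregman :: "('a::real_inner \<Rightarrow> real) \<Rightarrow> ('a \<Rightarrow> 'a) \<Rightarrow> 'a \<Rightarrow> 'a \<Rightarrow> real" where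
  "bregman f gradf u w = f u - f w - inner (gradf w) (u - w)"

definition lipschitz_smooth :: "('a::real_inner \<Rightarrow> real) \<Rightarrow> ('a \<Rightarrow> 'a) \<Rightarrow> real \<Rightarrow> bool" where
  "lipschitz_smooth f gradf L \<longleftrightarrow> (\<forall>u w. bregman f gradf u w \<le> L / 2 * (norm (u - w))\<^sup>2)"

definition eps_subdiff :: "('a::real_inner \<Rightarrow> ereal) \<Rightarrow> real \<Rightarrow> 'a \<Rightarrow> 'a set" where
  "eps_subdiff h \<epsilon> xb = (if xb \<in> edom h then
     {v. \<forall>u. ereal (inner v (u - xb)) \<le> h u - h xb + ereal \<epsilon>} else {})"

end

theory Submission
  imports Defs
begin

text \<open>Sum three inequalities: the gradient inequality of the convex function \<open>f\<close> at \<open>x\<close>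
  (evaluated at \<open>z\<close>), the line search bound on \<open>D\<^sub>f(xt, x)\<close>, and the
  \<open>\<epsilon>\<close>-subgradient inequality of \<open>g\<close> at \<open>xt\<close>. The gradient terms cancel, and the
  three-point identity \<open>\<parallel>x - z\<parallel>\<^sup>2 = \<parallel>x - xt\<parallel>\<^sup>2 + \<parallel>z - xt\<parallel>\<^sup>2 - 2\<langle>x - xt, z - xt\<rangle>\<close>
  converts the remaining inner product into the quadratic terms.\<close>

lemma convex_on_restrict_line:
  fixes f :: "'a::real_vector \<Rightarrow> real"
  assumes "convex_on UNIV f"
  shows "convex_on UNIV (\<lambda>t::real. f (x + t *\<^sub>R d))"
proof (rule convex_onI)
  fix t u v :: real
  assume t: "0 < t" "t < 1"
  have "x + ((1 - t) * u + t * v) *\<^sub>R d = (1 - t) *\<^sub>R (x + u *\<^sub>R d) + t *\<^sub>R (x + v *\<^sub>R d)"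
    by (simp add: algebra_simps)
  then show "f (x + ((1 - t) *\<^sub>R u + t *\<^sub>R v) *\<^sub>R d)
      \<le> (1 - t) * f (x + u *\<^sub>R d) + t * f (x + v *\<^sub>R d)"
    using convex_onD[OF assms, of t "x + u *\<^sub>R d" "x + v *\<^sub>R d"] t by simp
qed simp

lemma convex_on_has_derivative_above_tangent:
  fixes f :: "'a::real_normed_vector \<Rightarrow> real"
  assumes convex: "convex_on UNIV f" and deriv: "(f has_derivative f') (at x)"
  shows "f' (z - x) \<le> f z - f x"
proof -
  define d where "d = z - x"
  have "((\<lambda>t::real. x + t *\<^sub>R d) has_derivative (\<lambda>t. t *\<^sub>R d)) (at 0)"
    by (auto intro!: derivative_eq_intros)
  moreover have "(f has_derivative f') (at (x + (0::real) *\<^sub>R d))"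
    using deriv by simp
  ultimately have "((\<lambda>t. f (x + t *\<^sub>R d)) has_derivative (\<lambda>t. f' (t *\<^sub>R d))) (at 0)"
    by (rule has_derivative_compose)
  moreover have "(\<lambda>t. f' (t *\<^sub>R d)) = (*) (f' d)"
    using linear_scale[OF has_derivative_linear[OF deriv]] by (auto simp: mult.commute)
  ultimately have "((\<lambda>t. f (x + t *\<^sub>R d)) has_field_derivative f' d) (at 0)"
    by (simp add: has_field_derivative_def)
  from convex_on_imp_above_tangent[OF convex_on_restrict_line[OF convex] _ _ _ this, of 1]
  show ?thesis
    by (simp add: d_def)
qed

lemma eps_subdiff_imp_edom: "v \<in> eps_subdiff h \<epsilon> xb \<Longrightarrow> xb \<in> edom h"
  by (simp add: eps_subdiff_def split: if_splits)

lemma eps_subdiffD: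
  assumes "v \<in> eps_subdiff h \<epsilon> xb" and "h xb = ereal s" and "h u = ereal r"
  shows "inner v (u - xb) \<le> r - s + \<epsilon>"
proof -
  have "ereal (inner v (u - xb)) \<le> h u - h xb + ereal \<epsilon>"
    using assms(1) eps_subdiff_imp_edom[OF assms(1)] by (simp add: eps_subdiff_def)
  then show ?thesis
    using assms(2,3) by simp
qed

lemma power2_norm_diff_three_point:
  fixes x y z :: "'a::real_inner"
  shows "(norm (x - z))\<^sup>2 = (norm (x - y))\<^sup>2 + (norm (z - y))\<^sup>2 - 2 * inner (x - y) (z - y)"
  by (simp add: power2_norm_eq_inner inner_diff_left inner_diff_right inner_commute)

lemma proximal_gradient_three_point_inequality:
  fixes x xt z p :: "'a::real_inner" and fx fz fxt gz gxt :: real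
  assumes tangent: "inner p (z - x) \<le> fz - fx"
    and line_search: "fxt - fx - inner p (xt - x) \<le> B / 2 * (norm (x - xt))\<^sup>2"
    and subgrad: "inner ((B + \<rho>) *\<^sub>R (x - xt) - p) (z - xt) \<le> gz - gxt + \<epsilon>"
  shows "- \<epsilon> \<le> fz + gz - (fxt + gxt)
           + ((B + \<rho>) / 2 * (norm (x - z))\<^sup>2 - (B + \<rho>) / 2 * (norm (z - xt))\<^sup>2
              - \<rho> / 2 * (norm (xt - x))\<^sup>2)"
proof -
  have "inner ((B + \<rho>) *\<^sub>R (x - xt) - p) (z - xt)
      = (B + \<rho>) * inner (x - xt) (z - xt) - inner p (z - x) + inner p (xt - x)"
    by (simp add: inner_diff_left inner_diff_right algebra_simps)
  moreover have "(B + \<rho>) / 2 * (norm (x - z))\<^sup>2 - (B + \<rho>) / 2 * (norm (z - xt))\<^sup>2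
      - \<rho> / 2 * (norm (xt - x))\<^sup>2 = B / 2 * (norm (x - xt))\<^sup>2 - (B + \<rho>) * inner (x - xt) (z - xt)"
    by (simp add: power2_norm_diff_three_point[of x z xt] norm_minus_commute[of xt x] field_simps)
  ultimately show ?thesis
    using assms by linarith
qed

theorem theorem2p15:
  fixes f :: "'a::euclidean_space \<Rightarrow> real" and gradf :: "'a \<Rightarrow> 'a"
    and g :: "'a \<Rightarrow> ereal" and L \<epsilon> B \<rho> :: real and x xt :: "'a"
  assumes f_convex: "convex_on UNIV f"
    and f_grad: "\<And>w. (f has_derivative (\<lambda>h. inner (gradf w) h)) (at w)"
    and f_smooth: "lipschitz_smooth f gradf L"
    and g_proper: "proper_fun g" and g_closed: "closed_fun g" and g_convex: "convex_efun g"
    and eps: "\<epsilon> \<ge> 0" and Bnn: "B \<ge> 0" and rho: "\<rho> \<ge> 0"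
    and prox: "(B + \<rho>) *\<^sub>R (x - xt) - gradf x \<in> eps_subdiff g \<epsilon> xt"
    and ls: "bregman f gradf xt x \<le> B / 2 * (norm (x - xt))\<^sup>2"
  shows "\<forall>z. - ereal \<epsilon> \<le> (ereal (f z) + g z) - (ereal (f xt) + g xt)
            + ereal ((B + \<rho>) / 2 * (norm (x - z))\<^sup>2 - (B + \<rho>) / 2 * (norm (z - xt))\<^sup>2
                     - \<rho> / 2 * (norm (xt - x))\<^sup>2)"
proof
  fix z
  have g_not_MInf: "g u \<noteq> -\<infinity>" for u
    using g_proper by (simp add: proper_fun_def)
  obtain s where s: "g xt = ereal s"
    using eps_subdiff_imp_edom[OF prox] g_not_MInf[of xt] by (cases "g xt") (auto simp: edom_def)
  show "- ereal \<epsilon> \<le> (ereal (f z) + g z) - (ereal (f xt) + g xt)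
            + ereal ((B + \<rho>) / 2 * (norm (x - z))\<^sup>2 - (B + \<rho>) / 2 * (norm (z - xt))\<^sup>2
                     - \<rho> / 2 * (norm (xt - x))\<^sup>2)"
  proof (cases "g z")
    case (real r)
    have "- \<epsilon> \<le> f z + r - (f xt + s)
           + ((B + \<rho>) / 2 * (norm (x - z))\<^sup>2 - (B + \<rho>) / 2 * (norm (z - xt))\<^sup>2
              - \<rho> / 2 * (norm (xt - x))\<^sup>2)"
    proof (rule proximal_gradient_three_point_inequality)
      show "inner (gradf x) (z - x) \<le> f z - f x"
        by (rule convex_on_has_derivative_above_tangent[OF f_convex f_grad])
      show "f xt - f x - inner (gradf x) (xt - x) \<le> B / 2 * (norm (x - xt))\<^sup>2"
        using ls by (simp add: bregman_def)
      show "inner ((B + \<rho>) *\<^sub>R (x - xt) - gradf x) (z - xt) \<le> r - s + \<epsilon>"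
        by (rule eps_subdiffD[OF prox s real])
    qed
    then show ?thesis
      using real s by simp
  qed (use s g_not_MInf in auto)
qed

end
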